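(* Let $G$ be a Hausdorff topological group and $\beta\colon G\times Y\to Y$ a continuous global action on a topological space $Y$, and let $U$ be an open subset of $Y$. Let $\theta$ be the restriction of $\beta$ to $U$, i.e. the partial action with $U_g=U\cap\beta_g(U)$ and $\theta_g=\beta_g|_{U_{g^{-1}}}$. Then the enveloping space $U_G$ of $\theta$ is homeomorphic to an open subset of $Y$.
   Context: For a topological partial action $\theta=\{\theta_g\colon U_{g^{-1}}\to U_g\}$ on $U$, the enveloping space is $U_G=(G\times U)/R$ with the quotient topology, where $(g,x)R(h,y)$ iff $x\in U_{g^{-1}h}$ and $\theta_{h^{-1}g}(x)=y$. *)

theory Defs
  imports "HOL-Analysis.Analysis"
begin

definition quotient_topology :: "'a topology \<Rightarrow> ('a \<times> 'a) set \<Rightarrow> 'a set topology" where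
  "quotient_topology T R =
     topology (\<lambda>S. S \<subseteq> (\<lambda>p. R `` {p}) ` topspace T \<and>
                   openin T {p \<in> topspace T. R `` {p} \<in> S})"

text \<open>Relation R of the enveloping space of a partial action (D, \<theta>), with
  D g = U_g and \<theta> g : U_{g^{-1}} \<rightarrow> U_g. The group is written additively:
  (g,x) R (h,y) iff x \<in> U_{g^{-1}h} and \<theta>_{h^{-1}g}(x) = y.\<close>
definition env_rel :: "('g::group_add \<Rightarrow> 'a set) \<Rightarrow> ('g \<Rightarrow> 'a \<Rightarrow> 'a) \<Rightarrow> (('g \<times> 'a) \<times> ('g \<times> 'a)) set" where
  "env_rel D \<theta> = {((g, x), (h, y)). x \<in> D (- g + h) \<and> \<theta> (- h + g) x = y}"

definition enveloping_space ::
  "'a topology \<Rightarrow> ('g::{topological_space, group_add} \<Rightarrow> 'a set) \<Rightarrow> ('g \<Rightarrow> 'a \<Rightarrow> 'a) \<Rightarrow> ('g \<times> 'a) set topology" where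
  "enveloping_space X D \<theta> = quotient_topology (prod_topology euclidean X) (env_rel D \<theta>)"

end

theory Submission
  imports Defs
begin

(* The orbit map (g, x) \<mapsto> \<beta> g x from G \<times> U onto V = \<beta> ` (G \<times> U) is continuous, and it is
   open because every \<beta> g is a homeomorphism of Y and U is open; in particular V is open.
   Its fibres are exactly the classes of R, since (g, x) R (h, y) iff \<beta> g x = \<beta> h y.
   So both V and U_G are quotients of G \<times> U with the same fibres, hence homeomorphic. *)

lemma openin_quotient_topology:
  "openin (quotient_topology T R) S \<longleftrightarrow>
     S \<subseteq> (\<lambda>p. R `` {p}) ` topspace T \<and> openin T {p \<in> topspace T. R `` {p} \<in> S}"
proof -
  let ?open = "\<lambda>S. S \<subseteq> (\<lambda>p. R `` {p}) ` topspace T \<and> openin T {p \<in> topspace T. R `` {p} \<in> S}"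
  have "istopology ?open"
    unfolding istopology_def
  proof (rule conjI; intro allI impI)
    fix S S'
    assume "?open S" "?open S'"
    moreover have "{p \<in> topspace T. R `` {p} \<in> S \<inter> S'} =
        {p \<in> topspace T. R `` {p} \<in> S} \<inter> {p \<in> topspace T. R `` {p} \<in> S'}"
      by blast
    ultimately show "?open (S \<inter> S')"
      by auto
  next
    fix K
    assume "\<forall>S\<in>K. ?open S"
    moreover have "{p \<in> topspace T. R `` {p} \<in> \<Union>K} = (\<Union>S\<in>K. {p \<in> topspace T. R `` {p} \<in> S})"
      by blast
    ultimately show "?open (\<Union>K)"
      by (auto intro: openin_Union)
  qed
  then show ?thesis
    unfolding quotient_topology_def by simp
qed

lemma topspace_quotient_topology:
  "topspace (quotient_topology T R) = (\<lambda>p. R `` {p}) ` topspace T"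
proof (rule antisym)
  show "topspace (quotient_topology T R) \<subseteq> (\<lambda>p. R `` {p}) ` topspace T"
    using openin_quotient_topology[of T R "topspace (quotient_topology T R)"] by simp
  have "{p \<in> topspace T. R `` {p} \<in> (\<lambda>p. R `` {p}) ` topspace T} = topspace T"
    by blast
  then have "openin (quotient_topology T R) ((\<lambda>p. R `` {p}) ` topspace T)"
    unfolding openin_quotient_topology by simp
  then show "(\<lambda>p. R `` {p}) ` topspace T \<subseteq> topspace (quotient_topology T R)"
    by (rule openin_subset)
qed

lemma quotient_map_quotient_topology:
  "quotient_map T (quotient_topology T R) (\<lambda>p. R `` {p})"
  unfolding quotient_map_def topspace_quotient_topology openin_quotient_topology by blast

lemma homeomorphic_space_quotient_maps_same_fibres:
  assumes f: "quotient_map X Y f" and g: "quotient_map X Z g"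
    and fibres: "\<And>x x'. \<lbrakk>x \<in> topspace X; x' \<in> topspace X\<rbrakk> \<Longrightarrow> f x = f x' \<longleftrightarrow> g x = g x'"
  shows "Y homeomorphic_space Z"
proof -
  obtain h where h: "continuous_map Y Z h" "\<And>x. x \<in> topspace X \<Longrightarrow> h (f x) = g x"
    by (rule quotient_map_lift_exists[OF f quotient_imp_continuous_map[OF g]]) (use fibres in blast)+
  obtain k where k: "continuous_map Z Y k" "\<And>x. x \<in> topspace X \<Longrightarrow> k (g x) = f x"
    by (rule quotient_map_lift_exists[OF g quotient_imp_continuous_map[OF f]]) (use fibres in blast)+
  have "k (h y) = y" if "y \<in> topspace Y" for y
  proof -
    from that obtain x where "x \<in> topspace X" "y = f x"
      using quotient_imp_surjective_map[OF f] by blast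
    then show ?thesis using h k by simp
  qed
  moreover have "h (k z) = z" if "z \<in> topspace Z" for z
  proof -
    from that obtain x where "x \<in> topspace X" "z = g x"
      using quotient_imp_surjective_map[OF g] by blast
    then show ?thesis using h k by simp
  qed
  ultimately have "homeomorphic_maps Y Z h k"
    unfolding homeomorphic_maps_def using h k by blast
  then show ?thesis
    by (rule homeomorphic_maps_imp_homeomorphic_space)
qed

lemma quotient_topology_homeomorphic_open_image:
  assumes cont: "continuous_map T X f" and open_f: "open_map T X f"
    and fibres: "\<And>p p'. p \<in> topspace T \<Longrightarrow> (p, p') \<in> R \<longleftrightarrow> p' \<in> topspace T \<and> f p = f p'"
  shows "quotient_topology T R homeomorphic_space subtopology X (f ` topspace T)"
proof (rule homeomorphic_space_quotient_maps_same_fibres[OF quotient_map_quotient_topology])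
  have "f ` topspace T \<subseteq> topspace X"
    using cont by (rule continuous_map_image_subset_topspace)
  then show "quotient_map T (subtopology X (f ` topspace T)) f"
    using cont open_f
    by (intro continuous_open_imp_quotient_map continuous_map_into_subtopology
          open_map_into_subtopology) auto
  have classes: "R `` {p} = {p' \<in> topspace T. f p = f p'}" if "p \<in> topspace T" for p
    using fibres[OF that] by auto
  show "R `` {p} = R `` {p'} \<longleftrightarrow> f p = f p'"
    if "p \<in> topspace T" "p' \<in> topspace T" for p p'
    unfolding classes[OF that(1)] classes[OF that(2)] using that by auto
qed

locale continuous_group_action =
  fixes Y :: "'y topology"
    and \<beta> :: "'g::{topological_space, group_add} \<Rightarrow> 'y \<Rightarrow> 'y"
  assumes continuous_action: "continuous_map (prod_topology euclidean Y) Y (\<lambda>(g, y). \<beta> g y)"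
    and action_zero: "\<And>y. y \<in> topspace Y \<Longrightarrow> \<beta> 0 y = y"
    and action_add: "\<And>g h y. y \<in> topspace Y \<Longrightarrow> \<beta> (g + h) y = \<beta> g (\<beta> h y)"
begin

lemma continuous_map_action: "continuous_map Y Y (\<beta> g)"
proof -
  have "continuous_map Y (prod_topology euclidean Y) (\<lambda>y. (g, y))"
    by (simp add: continuous_map_pairwise o_def)
  from continuous_map_compose[OF this continuous_action] show ?thesis
    by (simp add: o_def)
qed

lemma action_in_topspace: "y \<in> topspace Y \<Longrightarrow> \<beta> g y \<in> topspace Y"
  using continuous_map_image_subset_topspace[OF continuous_map_action] by blast

lemma action_minus_cancel:
  assumes "y \<in> topspace Y"
  shows "\<beta> (- g) (\<beta> g y) = y" and "\<beta> g (\<beta> (- g) y) = y"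
  by (simp_all add: assms action_zero action_add[OF assms, symmetric])

lemma openin_action_image:
  assumes "openin Y B"
  shows "openin Y (\<beta> g ` B)"
proof -
  have preimage: "\<beta> g ` B = {y \<in> topspace Y. \<beta> (- g) y \<in> B}"
  proof (intro equalityI subsetI)
    fix y
    assume "y \<in> \<beta> g ` B"
    then obtain b where b: "b \<in> B" "y = \<beta> g b"
      by blast
    then have "b \<in> topspace Y"
      using openin_subset[OF assms] by blast
    then show "y \<in> {y \<in> topspace Y. \<beta> (- g) y \<in> B}"
      using b action_in_topspace action_minus_cancel(1) by simp
  next
    fix y
    assume "y \<in> {y \<in> topspace Y. \<beta> (- g) y \<in> B}"
    then show "y \<in> \<beta> g ` B"
      using action_minus_cancel(2)[of y g] by (metis (mono_tags, lifting) image_eqI mem_Collect_eq)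
  qed
  show ?thesis
    unfolding preimage by (rule openin_continuous_map_preimage[OF continuous_map_action assms])
qed

lemma open_map_action: "open_map (prod_topology euclidean Y) Y (\<lambda>(g, y). \<beta> g y)"
  unfolding open_map_def
proof (intro allI impI)
  fix W :: "('g \<times> 'y) set"
  assume W: "openin (prod_topology euclidean Y) W"
  show "openin Y ((\<lambda>(g, y). \<beta> g y) ` W)"
  proof (subst openin_subopen, intro ballI)
    fix z
    assume "z \<in> (\<lambda>(g, y). \<beta> g y) ` W"
    then obtain g x where "(g, x) \<in> W" "z = \<beta> g x"
      by auto
    then obtain A B where "openin Y B" "g \<in> A" "x \<in> B" "A \<times> B \<subseteq> W"
      using W unfolding openin_prod_topology_alt by meson
    have "\<beta> g ` B = (\<lambda>(g, y). \<beta> g y) ` ({g} \<times> B)"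
      by auto
    also have "\<dots> \<subseteq> (\<lambda>(g, y). \<beta> g y) ` W"
      using \<open>g \<in> A\<close> \<open>A \<times> B \<subseteq> W\<close> by blast
    finally show "\<exists>T. openin Y T \<and> z \<in> T \<and> T \<subseteq> (\<lambda>(g, y). \<beta> g y) ` W"
      using \<open>z = \<beta> g x\<close> \<open>x \<in> B\<close> \<open>openin Y B\<close> openin_action_image by blast
  qed
qed

lemma open_map_action_from_open_subset:
  assumes "openin Y U"
  shows "open_map (prod_topology euclidean (subtopology Y U)) Y (\<lambda>(g, y). \<beta> g y)"
proof -
  have "openin (prod_topology euclidean Y) (UNIV \<times> U)"
    using assms by (simp add: openin_prod_Times_iff)
  then show ?thesis
    unfolding prod_topology_subtopology topspace_euclidean
    by (rule open_map_from_subtopology[OF open_map_action])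
qed

lemma env_rel_restriction_iff:
  assumes "U \<subseteq> topspace Y" "x \<in> U"
  shows "((g, x), (h, y)) \<in> env_rel (\<lambda>g. U \<inter> \<beta> g ` U) \<beta> \<longleftrightarrow> y \<in> U \<and> \<beta> g x = \<beta> h y"
proof
  have x: "x \<in> topspace Y"
    using assms by blast
  assume "((g, x), (h, y)) \<in> env_rel (\<lambda>g. U \<inter> \<beta> g ` U) \<beta>"
  then obtain u where u: "u \<in> U" "x = \<beta> (- g + h) u" and y: "y = \<beta> (- h + g) x"
    unfolding env_rel_def by auto
  have "u \<in> topspace Y"
    using u assms by blast
  then have "y = \<beta> (- h + g) (\<beta> (- g + h) u)"
    using u y by simp
  also have "\<dots> = u"
    using \<open>u \<in> topspace Y\<close> action_add[symmetric] action_zero by (simp add: add.assoc)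
  finally have "y = u" .
  moreover have "\<beta> h y = \<beta> g x"
    using y x action_add[of x h "- h + g"] by (simp add: add.assoc)
  ultimately show "y \<in> U \<and> \<beta> g x = \<beta> h y"
    using u by simp
next
  assume y: "y \<in> U \<and> \<beta> g x = \<beta> h y"
  then have xy: "x \<in> topspace Y" "y \<in> topspace Y"
    using assms by blast+
  have "x = \<beta> (- g) (\<beta> g x)"
    using xy action_minus_cancel(1) by simp
  also have "\<dots> = \<beta> (- g + h) y"
    using y xy action_add by simp
  finally have "x \<in> U \<inter> \<beta> (- g + h) ` U"
    using y assms(2) by blast
  moreover have "\<beta> (- h + g) x = y"
    using y xy action_add action_minus_cancel(1) by simp
  ultimately show "((g, x), (h, y)) \<in> env_rel (\<lambda>g. U \<inter> \<beta> g ` U) \<beta>"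
    unfolding env_rel_def by simp
qed

end

theorem lemma3p8:
  fixes Y :: "'y topology"
    and \<beta> :: "'g::{topological_group_add, t2_space} \<Rightarrow> 'y \<Rightarrow> 'y"
    and U :: "'y set"
  assumes cont: "continuous_map (prod_topology euclidean Y) Y (\<lambda>(g, y). \<beta> g y)"
    and act_id: "\<forall>y\<in>topspace Y. \<beta> 0 y = y"
    and act_comp: "\<forall>g h. \<forall>y\<in>topspace Y. \<beta> (g + h) y = \<beta> g (\<beta> h y)"
    and U_open: "openin Y U"
  shows "\<exists>V. openin Y V \<and>
           enveloping_space (subtopology Y U) (\<lambda>g. U \<inter> \<beta> g ` U) \<beta>
             homeomorphic_space subtopology Y V"
proof -
  interpret continuous_group_action Y \<beta>
    using cont act_id act_comp by unfold_locales blast+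
  define T where "T = prod_topology (euclidean :: 'g topology) (subtopology Y U)"
  define act where "act = (\<lambda>(g, y). \<beta> g y)"
  have U_sub: "U \<subseteq> topspace Y"
    using U_open by (rule openin_subset)
  have cont_act: "continuous_map T Y act"
    unfolding T_def act_def prod_topology_subtopology
    by (rule continuous_map_from_subtopology[OF continuous_action])
  have fibres: "(p, p') \<in> env_rel (\<lambda>g. U \<inter> \<beta> g ` U) \<beta> \<longleftrightarrow> p' \<in> topspace T \<and> act p = act p'"
    if p: "p \<in> topspace T" for p p'
  proof -
    have topspace_T: "topspace T = UNIV \<times> U"
      unfolding T_def using U_sub by auto
    obtain g x where "p = (g, x)" "x \<in> U"
      using p topspace_T by blast
    moreover obtain h y where "p' = (h, y)"
      by fastforce
    ultimately show ?thesis
      unfolding act_def topspace_T using env_rel_restriction_iff[OF U_sub] by simp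
  qed
  have open_act: "open_map T Y act"
    unfolding T_def act_def using U_open by (rule open_map_action_from_open_subset)
  then have "openin Y (act ` topspace T)"
    by (simp add: open_map_def)
  moreover have "enveloping_space (subtopology Y U) (\<lambda>g. U \<inter> \<beta> g ` U) \<beta>
      homeomorphic_space subtopology Y (act ` topspace T)"
    unfolding enveloping_space_def T_def[symmetric]
    using cont_act open_act fibres by (rule quotient_topology_homeomorphic_open_image)
  ultimately show ?thesis
    by blast
qed

end
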